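(* Let $A$ be an alphabet. For all words $\mathbf a,\mathbf b,\mathbf c,\mathbf d\in A^\ast$, in the algebra $(A^\ast,\cdot,A^\ast)$: $$\mathbf a:\mathbf b::_m\mathbf c:\mathbf d\iff \exists\,\mathbf a_1,\mathbf a_2,\mathbf a_3,\mathbf b_1,\mathbf b_2,\mathbf b_3\in A^\ast:\ \mathbf a=\mathbf a_1\mathbf a_2\mathbf a_3,\ \mathbf b=\mathbf b_1\mathbf a_2\mathbf b_3,\ \mathbf c=\mathbf a_1\mathbf b_2\mathbf a_3,\ \mathbf d=\mathbf b_1\mathbf b_2\mathbf b_3.$$
   Context: $(A^\ast,\cdot,A^\ast)$ is the algebra whose universe is the set $A^\ast$ of all finite words over $A$ (including the empty word $\varepsilon$), with concatenation as binary operation and every word as a constant. A justification is a pair of terms $s\to t$ with the variables of $t$ among those of $s$; monolinear justifications are those where $s,t$ contain only one fixed variable $x$, occurring at most once in $s$ and at most once in $t$. $\uparrow^m(\mathbf a\to\mathbf b)$ is the set of monolinear justifications $s\to t$ with $\mathbf a=s(\mathbf o)$, $\mathbf b=t(\mathbf o)$ for some value $\mathbf o$ of $x$; $\uparrow^m(\mathbf a\to\mathbf b:\!\cdot\,\mathbf c\to\mathbf d):=\uparrow^m(\mathbf a\to\mathbf b)\cap\uparrow^m(\mathbf c\to\mathbf d)$. A monolinear justification is trivial if it lies in all sets $\uparrow^m(\mathbf a'\to\mathbf b':\!\cdot\,\mathbf c'\to\mathbf d')$. $\mathbf a\to\mathbf b:\!\cdot_m\,\mathbf c\to\mathbf d$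 holds iff either (i) all justifications in $\uparrow^m(\mathbf a\to\mathbf b)\cup\uparrow^m(\mathbf c\to\mathbf d)$ are trivial, or (ii) $J_{\mathbf d}:=\uparrow^m(\mathbf a\to\mathbf b:\!\cdot\,\mathbf c\to\mathbf d)$ contains a non-trivial justification and for every $\mathbf d'$, $J_{\mathbf d}\subseteq J_{\mathbf d'}$ implies $J_{\mathbf d'}$ contains a non-trivial justification and $J_{\mathbf d'}\subseteq J_{\mathbf d}$ (ignoring trivial justifications). $\mathbf a:\mathbf b::_m\mathbf c:\mathbf d$ iff $\mathbf a\to\mathbf b:\!\cdot_m\,\mathbf c\to\mathbf d$, $\mathbf b\to\mathbf a:\!\cdot_m\,\mathbf d\to\mathbf c$, $\mathbf c\to\mathbf d:\!\cdot_m\,\mathbf a\to\mathbf b$, $\mathbf d\to\mathbf c:\!\cdot_m\,\mathbf b\to\mathbf a$ all hold. *)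

theory Defs
  imports Main
begin

text \<open>Terms of the word algebra (A*, concatenation, every word a constant) in the
single fixed variable x.  Words over the alphabet are lists over the type 'a.\<close>

datatype 'a trm = X | C "'a list" | Cat "'a trm" "'a trm"

fun eval :: "'a trm \<Rightarrow> 'a list \<Rightarrow> 'a list" where
  "eval X o' = o'"
| "eval (C w) o' = w"
| "eval (Cat s t) o' = eval s o' @ eval t o'"

fun occ :: "'a trm \<Rightarrow> nat" where
  "occ X = 1"
| "occ (C w) = 0"
| "occ (Cat s t) = occ s + occ t"

definition monolinear :: "'a trm \<times> 'a trm \<Rightarrow> bool" where
  "monolinear j \<longleftrightarrow> occ (fst j) \<le> 1 \<and> occ (snd j) \<le> 1
      \<and> (occ (snd j) > 0 \<longrightarrow> occ (fst j) > 0)"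

definition up_m :: "'a list \<Rightarrow> 'a list \<Rightarrow> ('a trm \<times> 'a trm) set" where
  "up_m a b = {j. monolinear j \<and> (\<exists>o'. a = eval (fst j) o' \<and> b = eval (snd j) o')}"

definition up_m2 :: "'a list \<Rightarrow> 'a list \<Rightarrow> 'a list \<Rightarrow> 'a list \<Rightarrow> ('a trm \<times> 'a trm) set" where
  "up_m2 a b c d = up_m a b \<inter> up_m c d"

definition trivial_just :: "'a trm \<times> 'a trm \<Rightarrow> bool" where
  "trivial_just j \<longleftrightarrow> monolinear j \<and> (\<forall>a' b' c' d'. j \<in> up_m2 a' b' c' d')"

definition nontriv :: "('a trm \<times> 'a trm) set \<Rightarrow> ('a trm \<times> 'a trm) set" where
  "nontriv S = {j \<in> S. \<not> trivial_just j}"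

definition arrow_prop :: "'a list \<Rightarrow> 'a list \<Rightarrow> 'a list \<Rightarrow> 'a list \<Rightarrow> bool" where
  "arrow_prop a b c d \<longleftrightarrow>
     (\<forall>j \<in> up_m a b \<union> up_m c d. trivial_just j)
   \<or> (nontriv (up_m2 a b c d) \<noteq> {} \<and>
      (\<forall>d'. nontriv (up_m2 a b c d) \<subseteq> nontriv (up_m2 a b c d') \<longrightarrow>
              nontriv (up_m2 a b c d') \<noteq> {} \<and>
              nontriv (up_m2 a b c d') \<subseteq> nontriv (up_m2 a b c d)))"

definition analog_prop :: "'a list \<Rightarrow> 'a list \<Rightarrow> 'a list \<Rightarrow> 'a list \<Rightarrow> bool" where
  "analog_prop a b c d \<longleftrightarrow>
     arrow_prop a b c d \<and> arrow_prop b a d c \<and> arrow_prop c d a b \<and> arrow_prop d c b a"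

end

theory Submission
  imports Defs
begin

text \<open>No monolinear justification is trivial: none lies in both \<open>\<up>(\<epsilon> \<rightarrow> \<epsilon>)\<close> and
\<open>\<up>(\<epsilon> \<rightarrow> z)\<close> for a letter \<open>z\<close>.  Hence \<open>a \<rightarrow> b :\<cdot>\<^sub>m c \<rightarrow> d\<close> says that the common
justifications form a nonempty set that is maximal among all choices of \<open>d\<close>.
A common justification \<open>a\<^sub>1 x a\<^sub>3 \<rightarrow> b\<^sub>1 x b\<^sub>3\<close> determines \<open>d\<close> from \<open>c\<close>, which gives
maximality and thus the backward direction.  Conversely, a common monolinear
justification either has a linear right-hand side, and is then of that form, or
a ground one, which forces \<open>b = d\<close>; applied to \<open>b \<rightarrow> a :\<cdot>\<^sub>m d \<rightarrow> c\<close> the same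
alternative then forces \<open>a = c\<close>, and \<open>a : b :: a : b\<close> is a trivial instance.\<close>

lemma eval_ground: "occ s = 0 \<Longrightarrow> eval s w = eval s w'"
  by (induction s) auto

lemma eval_linear: "occ s = 1 \<Longrightarrow> \<exists>u v. \<forall>w. eval s w = u @ w @ v"
proof (induction s)
  case X
  have "\<forall>w. eval X w = [] @ w @ []" by simp
  then show ?case by blast
next
  case (Cat s1 s2)
  then consider "occ s1 = 1" "occ s2 = 0" | "occ s1 = 0" "occ s2 = 1" by fastforce
  then show ?case
  proof cases
    case 1
    with Cat.IH(1) obtain u v where "\<forall>w. eval s1 w = u @ w @ v" by blast
    then have "\<forall>w. eval (Cat s1 s2) w = u @ w @ (v @ eval s2 [])"
      using eval_ground[OF 1(2)] by simp
    then show ?thesis by blast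
  next
    case 2
    with Cat.IH(2) obtain u v where "\<forall>w. eval s2 w = u @ w @ v" by blast
    then have "\<forall>w. eval (Cat s1 s2) w = (eval s1 [] @ u) @ w @ v"
      using eval_ground[OF 2(1)] by simp
    then show ?thesis by blast
  qed
qed simp

lemma monolinear_linear_rhs:
  "monolinear (s, t) \<Longrightarrow> occ t \<noteq> 0 \<Longrightarrow> occ s = 1 \<and> occ t = 1"
  unfolding monolinear_def by auto

lemma up_m_Nil_unique:
  assumes "(s, t) \<in> up_m [] b" "(s, t) \<in> up_m [] b'"
  shows "b = b'"
proof -
  from assms obtain w w' where mono: "monolinear (s, t)"
    and eval: "eval s w = []" "b = eval t w" "eval s w' = []" "b' = eval t w'"
    unfolding up_m_def by (auto simp: eq_commute)
  show "b = b'"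
  proof (cases "occ t = 0")
    case True
    then show ?thesis using eval eval_ground by metis
  next
    case False
    then obtain u v where "\<forall>w. eval s w = u @ w @ v"
      using monolinear_linear_rhs[OF mono] eval_linear by blast
    then have "w = w'" using eval by simp
    then show ?thesis using eval by simp
  qed
qed

lemma not_trivial_just: "\<not> trivial_just j"
proof
  assume "trivial_just j"
  then have "j \<in> up_m [] []" "j \<in> up_m [] [undefined]"
    unfolding trivial_just_def up_m2_def by blast+
  then show False using up_m_Nil_unique by (cases j) blast
qed

lemma nontriv_eq [simp]: "nontriv S = S"
  unfolding nontriv_def using not_trivial_just by blast

lemma arrow_prop_iff:
  "arrow_prop a b c d \<longleftrightarrow> up_m2 a b c d \<noteq> {} \<and>
     (\<forall>d'. up_m2 a b c d \<subseteq> up_m2 a b c d' \<longrightarrow> up_m2 a b c d' = up_m2 a b c d)"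
proof -
  have "(C a, C b) \<in> up_m a b"
    unfolding up_m_def monolinear_def by simp
  then have "\<not> (\<forall>j \<in> up_m a b \<union> up_m c d. trivial_just j)"
    using not_trivial_just by blast
  then show ?thesis
    unfolding arrow_prop_def by auto
qed

definition context_analogy :: "'a list \<Rightarrow> 'a list \<Rightarrow> 'a list \<Rightarrow> 'a list \<Rightarrow> bool" where
  "context_analogy a b c d \<longleftrightarrow> (\<exists>a1 a2 a3 b1 b2 b3 :: 'a list.
     a = a1 @ a2 @ a3 \<and> b = b1 @ a2 @ b3 \<and> c = a1 @ b2 @ a3 \<and> d = b1 @ b2 @ b3)"

lemma context_analogy_refl: "context_analogy a b a b"
  unfolding context_analogy_def by (metis append_Nil2)

lemma context_analogy_same_source: "context_analogy b a b c \<Longrightarrow> a = c"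
  unfolding context_analogy_def by auto

lemma arrow_prop_if_common_context:
  assumes "a = a1 @ w @ a3" "b = b1 @ w @ b3" "c = a1 @ w' @ a3" "d = b1 @ w' @ b3"
  shows "arrow_prop a b c d"
proof -
  let ?j = "(Cat (C a1) (Cat X (C a3)), Cat (C b1) (Cat X (C b3)))"
  have "monolinear ?j"
    unfolding monolinear_def by simp
  then have j: "?j \<in> up_m2 a b c d"
    unfolding up_m2_def up_m_def using assms by auto
  have "\<forall>d'. up_m2 a b c d \<subseteq> up_m2 a b c d' \<longrightarrow> up_m2 a b c d' = up_m2 a b c d"
  proof (intro allI impI)
    fix d'
    assume "up_m2 a b c d \<subseteq> up_m2 a b c d'"
    then have "?j \<in> up_m c d'"
      using j unfolding up_m2_def by blast
    then have "d' = d"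
      unfolding up_m_def using assms by auto
    then show "up_m2 a b c d' = up_m2 a b c d" by simp
  qed
  with j show ?thesis
    unfolding arrow_prop_iff by blast
qed

lemma common_justification_cases:
  assumes "up_m2 a b c d \<noteq> {}"
  shows "context_analogy a b c d \<or> b = d"
proof -
  from assms obtain s t where "(s, t) \<in> up_m a b" "(s, t) \<in> up_m c d"
    unfolding up_m2_def by auto
  then obtain w w' where mono: "monolinear (s, t)"
    and eval: "a = eval s w" "b = eval t w" "c = eval s w'" "d = eval t w'"
    unfolding up_m_def by auto
  show ?thesis
  proof (cases "occ t = 0")
    case True
    then show ?thesis using eval eval_ground by metis
  next
    case False
    then obtain u v u' v' where "\<forall>w. eval s w = u @ w @ v" "\<forall>w. eval t w = u' @ w @ v'"
      using monolinear_linear_rhs[OF mono] eval_linear by metis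
    then show ?thesis
      unfolding context_analogy_def using eval by blast
  qed
qed

theorem mainTheorem12:
  fixes a b c d :: "'a list"
  shows "analog_prop a b c d \<longleftrightarrow>
    (\<exists>a1 a2 a3 b1 b2 b3 :: 'a list.
        a = a1 @ a2 @ a3 \<and> b = b1 @ a2 @ b3 \<and> c = a1 @ b2 @ a3 \<and> d = b1 @ b2 @ b3)"
  unfolding context_analogy_def [symmetric]
proof
  assume "analog_prop a b c d"
  then have "up_m2 a b c d \<noteq> {}" "up_m2 b a d c \<noteq> {}"
    unfolding analog_prop_def arrow_prop_iff by blast+
  then have "context_analogy a b c d \<or> b = d" "context_analogy b a d c \<or> a = c"
    using common_justification_cases by blast+
  then have "context_analogy a b c d \<or> (a = c \<and> b = d)"
    using context_analogy_same_source by blast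
  then show "context_analogy a b c d"
    using context_analogy_refl by blast
next
  assume "context_analogy a b c d"
  then obtain a1 a2 a3 b1 b2 b3 where
    f: "a = a1 @ a2 @ a3" "b = b1 @ a2 @ b3" "c = a1 @ b2 @ a3" "d = b1 @ b2 @ b3"
    unfolding context_analogy_def by blast
  show "analog_prop a b c d"
    unfolding analog_prop_def
    using arrow_prop_if_common_context[OF f] arrow_prop_if_common_context[OF f(2,1,4,3)]
      arrow_prop_if_common_context[OF f(3,4,1,2)] arrow_prop_if_common_context[OF f(4,3,2,1)]
    by blast
qed

end
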